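(* Let $n\ge1$, $k=\lfloor\log_2 n\rfloor$ and $r=n-2^k$. Let $A\in\mathbb{R}^{n\times n}$ be the unit-row tree matrix of size $n$ (defined in the context). Then $$\beta(A)=\Big(2\sqrt{k+1}-\sqrt{k+2}\Big)+\frac{n}{2^{k}}\Big(\sqrt{k+2}-\sqrt{k+1}\Big).$$ In particular, when $n=2^k$, $\beta(A)=\sqrt{k+1}$.
   Context: For $A\in\mathbb{R}^{m\times n}$, $\beta(A)=\frac{1}{2^n}\sum_{x\in\{-1,1\}^n}\|Ax\|_\infty$. Tree matrix: with $k=\lfloor\log_2 n\rfloor$ and $r=n-2^k$, list the $2^k$ sign strings $s\in\{-1,1\}^k$ in lexicographic order (with $-1<+1$). Replace each of the first $r$ strings $s$ by its two extensions $(s,-1)$ and $(s,+1)$ (keeping the order), and keep the remaining $2^k-r$ strings unchanged; this gives $n$ strings, $2r$ of length $k+1$ and $2^k-r$ of length $k$ (they are the root-to-leaf paths of a binary tree with $n$ leaves filled from the left, with left edges labeled $-1$ and right edges $+1$). For each such string $t$, form the row vector in $\mathbb{R}^n$ given by $(1,t,0,\dots,0)$ (a leading $1$, then $t$, then zeros to length $n$), and divide it by its Euclidean norm (i.e. by $\sqrt{k+2}$ or $\sqrt{k+1}$). The $n\times n$ matrix with these rows is the unit-row tree matrix. *)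

theory Defs
  imports Complex_Main
begin

text \<open>Matrices of size m x n are represented as functions nat => nat => real,
  with only the entries i < m, j < n being relevant.\<close>

definition sign_vectors :: "nat \<Rightarrow> real list set" where
  "sign_vectors n = {xs. length xs = n \<and> set xs \<subseteq> {-1, 1}}"

definition inf_norm_Ax :: "nat \<Rightarrow> nat \<Rightarrow> (nat \<Rightarrow> nat \<Rightarrow> real) \<Rightarrow> real list \<Rightarrow> real" where
  "inf_norm_Ax m n A x = Max ((\<lambda>i. \<bar>\<Sum>j<n. A i j * x ! j\<bar>) ` {..<m})"

definition beta :: "nat \<Rightarrow> nat \<Rightarrow> (nat \<Rightarrow> nat \<Rightarrow> real) \<Rightarrow> real" where
  "beta m n A = (1 / 2 ^ n) * (\<Sum>x\<in>sign_vectors n. inf_norm_Ax m n A x)"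

fun sign_strings :: "nat \<Rightarrow> real list list" where
  "sign_strings 0 = [[]]"
| "sign_strings (Suc k) = map (\<lambda>s. (-1) # s) (sign_strings k) @ map (\<lambda>s. 1 # s) (sign_strings k)"

definition tree_k :: "nat \<Rightarrow> nat" where
  "tree_k n = nat \<lfloor>log 2 (real n)\<rfloor>"

text \<open>The n strings (root-to-leaf paths of the binary tree with n leaves).\<close>
definition tree_strings :: "nat \<Rightarrow> real list list" where
  "tree_strings n = (let k = tree_k n; r = n - 2 ^ k; ss = sign_strings k in
     concat (map (\<lambda>s. [s @ [-1], s @ [1]]) (take r ss)) @ drop r ss)"

definition euclid_norm :: "real list \<Rightarrow> real" where
  "euclid_norm v = sqrt (\<Sum>a\<leftarrow>v. a ^ 2)"

definition tree_row :: "nat \<Rightarrow> real list \<Rightarrow> real list" where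
  "tree_row n t = (let v = (1 # t) @ replicate (n - (length t + 1)) 0 in
     map (\<lambda>a. a / euclid_norm v) v)"

definition unit_row_tree_matrix :: "nat \<Rightarrow> nat \<Rightarrow> nat \<Rightarrow> real" where
  "unit_row_tree_matrix n i j = tree_row n (tree_strings n ! i) ! j"

end

theory Submission
  imports Defs
begin

text \<open>For a sign vector \<open>x = a # xs\<close>, the row of a string \<open>t\<close> gives
  \<open>\<bar>1 + \<langle>t, y\<rangle>\<bar> / sqrt (1 + length t)\<close> with \<open>y = a \<cdot> xs\<close>, which is at most
  \<open>sqrt (1 + length t)\<close> with equality iff \<open>t\<close> is a prefix of \<open>y\<close>, and at most
  \<open>sqrt (length t)\<close> otherwise. Hence \<open>\<parallel>A x\<parallel>\<^sub>\<infinity>\<close> is \<open>sqrt (k + 2)\<close> if the first \<open>k\<close>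
  entries of \<open>y\<close> form one of the \<open>r\<close> split strings and \<open>sqrt (k + 1)\<close> otherwise.
  It depends only on those \<open>k\<close> entries, which are uniformly distributed, so
  \<open>\<beta>(A) = (r sqrt (k + 2) + (2\<^sup>k - r) sqrt (k + 1)) / 2\<^sup>k\<close>.\<close>

lemma sign_vectors_Suc:
  "sign_vectors (Suc k) = (#) (-1) ` sign_vectors k \<union> (#) 1 ` sign_vectors k"
  unfolding sign_vectors_def by (auto simp: length_Suc_conv)

lemma length_sign_strings: "length (sign_strings k) = 2 ^ k"
  by (induction k) auto

lemma set_sign_strings: "set (sign_strings k) = sign_vectors k"
proof (induction k)
  case 0
  then show ?case by (auto simp: sign_vectors_def)
next
  case (Suc k)
  then show ?case by (simp add: sign_vectors_Suc)
qed

lemma distinct_sign_strings: "distinct (sign_strings k)"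
  by (induction k) (auto simp: distinct_map inj_on_def)

lemma finite_sign_vectors: "finite (sign_vectors k)"
  by (metis set_sign_strings List.finite_set)

lemma card_sign_vectors: "card (sign_vectors k) = 2 ^ k"
  by (metis set_sign_strings distinct_sign_strings distinct_card length_sign_strings)

lemma sum_sign_vectors_Suc:
  "(\<Sum>x\<in>sign_vectors (Suc k). f x) = (\<Sum>xs\<in>sign_vectors k. f ((-1) # xs) + f (1 # xs))"
proof -
  have "(#) (-1) ` sign_vectors k \<inter> (#) (1::real) ` sign_vectors k = {}" by auto
  then show ?thesis
    by (simp add: sign_vectors_Suc sum.union_disjoint finite_sign_vectors sum.reindex sum.distrib)
qed

lemma sum_sign_vectors_take:
  "(\<Sum>x\<in>sign_vectors (m + l). f (take m x))
     = 2 ^ l * (\<Sum>s\<in>sign_vectors m. f s :: 'a::comm_semiring_1)"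
proof (induction m arbitrary: f)
  case 0
  have "sign_vectors 0 = {[]}" by (auto simp: sign_vectors_def)
  then show ?case by (simp add: card_sign_vectors)
next
  case (Suc m)
  have "(\<Sum>x\<in>sign_vectors (Suc m + l). f (take (Suc m) x))
      = (\<Sum>xs\<in>sign_vectors (m + l). f ((-1) # take m xs) + f (1 # take m xs))"
    by (simp add: sum_sign_vectors_Suc)
  also have "\<dots> = 2 ^ l * (\<Sum>s\<in>sign_vectors m. f ((-1) # s) + f (1 # s))"
    by (rule Suc.IH)
  finally show ?case by (simp add: sum_sign_vectors_Suc)
qed

lemma sum_sign_vectors_scale:
  assumes "a \<in> {-1, 1}"
  shows "(\<Sum>xs\<in>sign_vectors k. f (map ((*) a) xs)) = (\<Sum>xs\<in>sign_vectors k. f xs)"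
proof -
  have involution: "map ((*) a) (map ((*) a) xs) = xs" for xs
    using assms by (induction xs) (auto simp: mult.assoc[symmetric])
  show ?thesis
    by (rule sum.reindex_bij_witness[where i = "map ((*) a)" and j = "map ((*) a)"])
       (use assms in \<open>auto simp del: map_map simp: involution sign_vectors_def\<close>)
qed

lemma abs_one_plus_sum_le:
  fixes f :: "nat \<Rightarrow> real"
  assumes "\<And>j. j < L \<Longrightarrow> \<bar>f j\<bar> \<le> 1"
  shows "\<bar>1 + (\<Sum>j<L. f j)\<bar> \<le> real L + 1"
proof -
  have "\<bar>\<Sum>j<L. f j\<bar> \<le> (\<Sum>j<L. 1)"
    by (rule order_trans[OF sum_abs sum_mono]) (use assms in auto)
  then show ?thesis by simp
qed

lemma abs_one_plus_sum_le_if_neg: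
  fixes f :: "nat \<Rightarrow> real"
  assumes "\<And>j. j < L \<Longrightarrow> \<bar>f j\<bar> \<le> 1" and "i < L" and "f i = -1"
  shows "\<bar>1 + (\<Sum>j<L. f j)\<bar> \<le> real L - 1"
proof -
  have "(\<Sum>j<L. f j) = f i + (\<Sum>j\<in>{..<L} - {i}. f j)"
    using \<open>i < L\<close> by (intro sum.remove) auto
  moreover have "\<bar>\<Sum>j\<in>{..<L} - {i}. f j\<bar> \<le> (\<Sum>j\<in>{..<L} - {i}. 1)"
    by (rule order_trans[OF sum_abs sum_mono]) (use assms in auto)
  ultimately show ?thesis using \<open>i < L\<close> \<open>f i = -1\<close> by simp
qed

definition aug_dot :: "real list \<Rightarrow> real list \<Rightarrow> real" where
  "aug_dot t y = 1 + (\<Sum>j<length t. t ! j * y ! j)"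

lemma sign_list_nth: "set xs \<subseteq> {-1, 1} \<Longrightarrow> j < length xs \<Longrightarrow> xs ! j \<in> {-1, 1}"
  by (auto dest: nth_mem)

lemma sign_lists_nth_mult:
  fixes t y :: "real list"
  assumes "set t \<subseteq> {-1, 1}" "set y \<subseteq> {-1, 1}" "length t \<le> length y" "j < length t"
  shows "\<bar>t ! j * y ! j\<bar> \<le> 1" and "t ! j \<noteq> y ! j \<Longrightarrow> t ! j * y ! j = -1"
  using sign_list_nth[OF assms(1,4)] sign_list_nth[OF assms(2), of j] assms(3,4) by auto

lemma abs_aug_dot_le:
  assumes "set t \<subseteq> {-1, 1}" "set y \<subseteq> {-1, 1}" "length t \<le> length y"
  shows "\<bar>aug_dot t y\<bar> \<le> real (length t) + 1"
  unfolding aug_dot_def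
  by (rule abs_one_plus_sum_le) (rule sign_lists_nth_mult[OF assms])

lemma aug_dot_prefix:
  assumes "set t \<subseteq> {-1, 1}" "take (length t) y = t"
  shows "aug_dot t y = real (length t) + 1"
proof -
  have "t ! j * y ! j = 1" if "j < length t" for j
    using that assms sign_list_nth[OF assms(1) that] nth_take[OF that, of y] by auto
  then show ?thesis by (simp add: aug_dot_def)
qed

lemma abs_aug_dot_le_mismatch:
  assumes "set t \<subseteq> {-1, 1}" "set y \<subseteq> {-1, 1}" "length t \<le> length y"
    and "i < length t" "t ! i \<noteq> y ! i"
  shows "\<bar>aug_dot t y\<bar> \<le> real (length t) - 1"
  unfolding aug_dot_def
  by (rule abs_one_plus_sum_le_if_neg[where i = i])
     (use sign_lists_nth_mult[OF assms(1-3)] assms(4,5) in auto)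

definition row_value :: "real list \<Rightarrow> real list \<Rightarrow> real" where
  "row_value t y = \<bar>aug_dot t y\<bar> / sqrt (real (length t) + 1)"

lemma row_value_le:
  assumes "set t \<subseteq> {-1, 1}" "set y \<subseteq> {-1, 1}" "length t \<le> length y"
  shows "row_value t y \<le> sqrt (real (length t) + 1)"
proof -
  have "row_value t y \<le> (real (length t) + 1) / sqrt (real (length t) + 1)"
    unfolding row_value_def using abs_aug_dot_le[OF assms] by (intro divide_right_mono) auto
  then show ?thesis by (simp add: real_div_sqrt)
qed

lemma row_value_prefix:
  assumes "set t \<subseteq> {-1, 1}" "take (length t) y = t"
  shows "row_value t y = sqrt (real (length t) + 1)"
  using aug_dot_prefix[OF assms] by (simp add: row_value_def real_div_sqrt)

lemma row_value_le_mismatch: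
  assumes "set t \<subseteq> {-1, 1}" "set y \<subseteq> {-1, 1}" "length t \<le> length y"
    and "i < length t" "t ! i \<noteq> y ! i"
  shows "row_value t y \<le> sqrt (real (length t))"
proof -
  let ?L = "real (length t)"
  have "\<bar>aug_dot t y\<bar> \<le> sqrt ?L * sqrt (?L + 1)"
  proof -
    have "?L \<le> sqrt (?L * (?L + 1))"
      by (rule real_le_rsqrt) (simp add: power2_eq_square distrib_left)
    then show ?thesis using abs_aug_dot_le_mismatch[OF assms] by (simp add: real_sqrt_mult)
  qed
  then show ?thesis by (simp add: row_value_def divide_le_eq)
qed

lemma tree_k_bounds:
  assumes "n \<ge> 1"
  shows "2 ^ tree_k n \<le> n" and "n < 2 ^ (tree_k n + 1)"
proof -
  have "int (tree_k n) = \<lfloor>log 2 (real n)\<rfloor>"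
    unfolding tree_k_def using assms by simp
  then have "\<lfloor>log (real (2::nat)) (real n)\<rfloor> = int (tree_k n)" by simp
  then show "2 ^ tree_k n \<le> n" and "n < 2 ^ (tree_k n + 1)"
    using floor_log_nat_eq_powr_iff[of 2 n "tree_k n"] assms by simp_all
qed

lemma Suc_le_two_power: "Suc k \<le> 2 ^ k"
  by (simp add: Suc_le_eq less_exp)

lemma mem_tree_strings_iff:
  "t \<in> set (tree_strings n) \<longleftrightarrow>
     (\<exists>s\<in>set (take (n - 2 ^ tree_k n) (sign_strings (tree_k n))). t = s @ [-1] \<or> t = s @ [1])
     \<or> t \<in> set (drop (n - 2 ^ tree_k n) (sign_strings (tree_k n)))"
  unfolding tree_strings_def Let_def by auto

lemma length_tree_strings:
  assumes "n \<ge> 1"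
  shows "length (tree_strings n) = n"
proof -
  have pairs: "length (concat (map (\<lambda>s. [f s, g s]) xs)) = 2 * length xs" for f g :: "'a \<Rightarrow> 'b" and xs
    by (induction xs) auto
  show ?thesis
    using tree_k_bounds[OF assms]
    unfolding tree_strings_def Let_def by (simp add: pairs length_sign_strings; arith)
qed

lemma tree_strings_elem:
  assumes "n \<ge> 1" and "t \<in> set (tree_strings n)"
  shows "set t \<subseteq> {-1, 1}" and "length t \<le> tree_k n + 1" and "length t < n"
proof -
  let ?k = "tree_k n"
  have sign_string: "set s \<subseteq> {-1, 1} \<and> length s = ?k" if "s \<in> set (sign_strings ?k)" for s
    using that by (simp add: set_sign_strings sign_vectors_def)
  have "set t \<subseteq> {-1, 1} \<and> length t \<le> ?k + 1 \<and> length t < n"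
    using assms(2)[unfolded mem_tree_strings_iff]
  proof
    assume "\<exists>s\<in>set (take (n - 2 ^ ?k) (sign_strings ?k)). t = s @ [-1] \<or> t = s @ [1]"
    then obtain s where s: "s \<in> set (take (n - 2 ^ ?k) (sign_strings ?k))" "t = s @ [-1] \<or> t = s @ [1]"
      by blast
    from s(1) have "n - 2 ^ ?k > 0" by (cases "n - 2 ^ ?k") auto
    moreover have "set s \<subseteq> {-1, 1} \<and> length s = ?k" using s(1) sign_string in_set_takeD by metis
    ultimately show ?thesis using s(2) Suc_le_two_power[of ?k] by auto
  next
    assume "t \<in> set (drop (n - 2 ^ ?k) (sign_strings ?k))"
    then have "set t \<subseteq> {-1, 1} \<and> length t = ?k" using sign_string in_set_dropD by metis
    then show ?thesis using Suc_le_two_power[of ?k] tree_k_bounds(1)[OF assms(1)] by auto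
  qed
  then show "set t \<subseteq> {-1, 1}" and "length t \<le> ?k + 1" and "length t < n" by auto
qed

lemma sum_tree_row:
  assumes "set t \<subseteq> {-1, 1}" and "length t < n"
  shows "(\<Sum>j<n. tree_row n t ! j * x ! j)
       = (x ! 0 + (\<Sum>j<length t. t ! j * x ! (j + 1))) / sqrt (real (length t) + 1)"
proof -
  define v where "v = (1 # t) @ replicate (n - (length t + 1)) (0::real)"
  have "(\<Sum>a\<leftarrow>t. a ^ 2) = real (length t)"
    using assms(1) by (induction t) auto
  then have norm: "euclid_norm v = sqrt (real (length t) + 1)"
    unfolding euclid_norm_def v_def by (simp add: sum_list_replicate)
  have row: "tree_row n t = map (\<lambda>a. a / sqrt (real (length t) + 1)) v"
    unfolding tree_row_def Let_def v_def[symmetric] norm ..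
  have "length v = n" using assms(2) by (simp add: v_def)
  then have "(\<Sum>j<n. tree_row n t ! j * x ! j) = (\<Sum>j<n. v ! j * x ! j / sqrt (real (length t) + 1))"
    by (intro sum.cong) (auto simp: row)
  also have "\<dots> = (\<Sum>j<n. v ! j * x ! j) / sqrt (real (length t) + 1)"
    by (simp add: sum_divide_distrib)
  also have "(\<Sum>j<n. v ! j * x ! j) = (\<Sum>j<Suc (length t). v ! j * x ! j)"
    by (rule sum.mono_neutral_right) (use assms(2) in \<open>auto simp: v_def nth_append\<close>)
  also have "\<dots> = x ! 0 + (\<Sum>j<length t. t ! j * x ! (j + 1))"
    unfolding sum.lessThan_Suc_shift by (simp add: v_def nth_append)
  finally show ?thesis .
qed

lemma inf_norm_unit_row_tree_matrix_eq_Max: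
  assumes "n \<ge> 1" and "a # xs \<in> sign_vectors n"
  shows "inf_norm_Ax n n (unit_row_tree_matrix n) (a # xs)
       = Max ((\<lambda>t. row_value t (map ((*) a) xs)) ` set (tree_strings n))"
proof -
  let ?ts = "tree_strings n" and ?y = "map ((*) a) xs"
  have a: "a \<in> {-1, 1}" and "length xs = n - 1" using assms(2) by (auto simp: sign_vectors_def)
  have row: "\<bar>\<Sum>j<n. unit_row_tree_matrix n i j * (a # xs) ! j\<bar> = row_value (?ts ! i) ?y"
    if "i < n" for i
  proof -
    let ?t = "?ts ! i"
    have t: "?t \<in> set ?ts" using that length_tree_strings[OF assms(1)] by simp
    note t_elem = tree_strings_elem[OF assms(1) t]
    have "a * (a + (\<Sum>j<length ?t. ?t ! j * xs ! j)) = aug_dot ?t ?y"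
      using a t_elem(3) \<open>length xs = n - 1\<close>
      by (auto simp: aug_dot_def sum_distrib_left algebra_simps intro!: sum.cong)
    then have "\<bar>a + (\<Sum>j<length ?t. ?t ! j * xs ! j)\<bar> = \<bar>aug_dot ?t ?y\<bar>"
      using a by (auto simp: abs_mult)
    then show ?thesis
      unfolding unit_row_tree_matrix_def sum_tree_row[OF t_elem(1,3)]
      by (simp add: row_value_def abs_divide)
  qed
  have "(\<lambda>i. \<bar>\<Sum>j<n. unit_row_tree_matrix n i j * (a # xs) ! j\<bar>) ` {..<n}
      = (\<lambda>t. row_value t ?y) ` ((!) ?ts ` {..<n})"
    using row by (auto simp: image_iff)
  also have "(!) ?ts ` {..<n} = set ?ts"
    using length_tree_strings[OF assms(1)] by (auto simp: set_conv_nth)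
  finally show ?thesis by (simp add: inf_norm_Ax_def)
qed

text \<open>\<open>leaf_norm n s\<close> is \<open>sqrt (1 + length t)\<close> for the longest tree string \<open>t\<close>
  extending the sign string \<open>s\<close> of length \<open>tree_k n\<close>.\<close>

definition leaf_norm :: "nat \<Rightarrow> real list \<Rightarrow> real" where
  "leaf_norm n s = (if s \<in> set (take (n - 2 ^ tree_k n) (sign_strings (tree_k n)))
     then sqrt (real (tree_k n) + 2) else sqrt (real (tree_k n) + 1))"

lemma Max_row_values_tree_strings:
  assumes "n \<ge> 1" and y: "y \<in> sign_vectors (n - 1)"
  shows "Max ((\<lambda>t. row_value t y) ` set (tree_strings n)) = leaf_norm n (take (tree_k n) y)"
proof -
  let ?k = "tree_k n" and ?r = "n - 2 ^ tree_k n"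
  let ?ts = "tree_strings n" and ?s = "take (tree_k n) y"
  have sy: "set y \<subseteq> {-1, 1}" and ly: "length y = n - 1"
    using y by (auto simp: sign_vectors_def)
  have "?k < n" using Suc_le_two_power[of ?k] tree_k_bounds(1)[OF assms(1)] by linarith
  then have ls: "length ?s = ?k" using ly by simp
  have "?s \<in> set (sign_strings ?k)"
    using ls sy set_take_subset[of ?k y] by (auto simp: set_sign_strings sign_vectors_def)
  note t_elem = tree_strings_elem[OF assms(1)]
  have value_le: "row_value t y \<le> sqrt (real (length t) + 1)" if "t \<in> set ?ts" for t
    using row_value_le[OF t_elem(1)[OF that] sy] t_elem(3)[OF that] ly by simp
  have fin: "finite ((\<lambda>t. row_value t y) ` set ?ts)" by simp
  show ?thesis
  proof (cases "?s \<in> set (take ?r (sign_strings ?k))")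
    case True
    then have "?r > 0" by (cases ?r) auto
    then have "?k < length y" using Suc_le_two_power[of ?k] ly by linarith
    then have t: "take (Suc ?k) y = ?s @ [y ! ?k]" by (simp add: take_Suc_conv_app_nth)
    moreover have "y ! ?k \<in> {-1, 1}" using sign_list_nth[OF sy \<open>?k < length y\<close>] .
    ultimately have "take (Suc ?k) y \<in> set ?ts" using True by (auto simp: mem_tree_strings_iff)
    moreover have "row_value (take (Suc ?k) y) y = sqrt (real ?k + 2)"
      using row_value_prefix[of "take (Suc ?k) y" y] set_take_subset[of "Suc ?k" y] sy
        \<open>?k < length y\<close> by (simp add: add.commute)
    moreover have "row_value t y \<le> sqrt (real ?k + 2)" if "t \<in> set ?ts" for t
    proof -
      have "sqrt (real (length t) + 1) \<le> sqrt (real ?k + 2)" using t_elem(2)[OF that] by simp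
      then show ?thesis using value_le[OF that] by linarith
    qed
    ultimately show ?thesis using True fin
      by (auto simp: leaf_norm_def intro!: Max_eqI intro: rev_image_eqI)
  next
    case False
    have "?s \<in> set (drop ?r (sign_strings ?k))"
      using \<open>?s \<in> set (sign_strings ?k)\<close> False by (metis Un_iff append_take_drop_id set_append)
    then have "?s \<in> set ?ts" by (simp add: mem_tree_strings_iff)
    moreover have "row_value ?s y = sqrt (real ?k + 1)"
      using row_value_prefix[of ?s y] set_take_subset[of ?k y] sy ls by simp
    moreover have "row_value t y \<le> sqrt (real ?k + 1)" if t: "t \<in> set ?ts" for t
      using t[unfolded mem_tree_strings_iff]
    proof
      assume "\<exists>s\<in>set (take ?r (sign_strings ?k)). t = s @ [-1] \<or> t = s @ [1]"
      then obtain s c where s: "s \<in> set (take ?r (sign_strings ?k))" "t = s @ [c]" by blast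
      have "length s = ?k"
        using in_set_takeD[OF s(1)] by (simp add: set_sign_strings sign_vectors_def)
      moreover have "s \<noteq> ?s" using s(1) False by auto
      ultimately obtain i where "i < ?k" "s ! i \<noteq> ?s ! i" using ls nth_equalityI by metis
      then have "row_value t y \<le> sqrt (real (length t))"
        using row_value_le_mismatch[OF t_elem(1)[OF t] sy, of i] t_elem(3)[OF t] ly s(2)
          \<open>length s = ?k\<close> by (simp add: nth_append)
      then show ?thesis using s(2) \<open>length s = ?k\<close> by (simp add: add.commute)
    next
      assume "t \<in> set (drop ?r (sign_strings ?k))"
      then have "length t = ?k"
        using in_set_dropD by (fastforce simp: set_sign_strings sign_vectors_def)
      then show ?thesis using value_le[OF t] by simp
    qed
    ultimately show ?thesis using False fin
      by (auto simp: leaf_norm_def intro!: Max_eqI intro: rev_image_eqI)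
  qed
qed

lemma inf_norm_unit_row_tree_matrix:
  assumes "n \<ge> 1" and "a # xs \<in> sign_vectors n"
  shows "inf_norm_Ax n n (unit_row_tree_matrix n) (a # xs)
       = leaf_norm n (take (tree_k n) (map ((*) a) xs))"
proof -
  have "map ((*) a) xs \<in> sign_vectors (n - 1)"
    using assms(2) by (auto simp: sign_vectors_def)
  then show ?thesis
    using inf_norm_unit_row_tree_matrix_eq_Max[OF assms] Max_row_values_tree_strings[OF assms(1)]
    by simp
qed

lemma sum_leaf_norm:
  assumes "n \<ge> 1"
  shows "(\<Sum>s\<in>sign_vectors (tree_k n). leaf_norm n s)
       = real (n - 2 ^ tree_k n) * sqrt (real (tree_k n) + 2)
         + (2 ^ tree_k n - real (n - 2 ^ tree_k n)) * sqrt (real (tree_k n) + 1)"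
proof -
  let ?k = "tree_k n" and ?r = "n - 2 ^ tree_k n"
  let ?A = "sign_vectors ?k" and ?T = "set (take ?r (sign_strings ?k))"
  have "?r \<le> 2 ^ ?k" using tree_k_bounds[OF assms] by simp
  have TA: "?T \<subseteq> ?A" using set_sign_strings[of ?k] set_take_subset by metis
  have cT: "card ?T = ?r"
    using \<open>?r \<le> 2 ^ ?k\<close> by (simp add: distinct_card distinct_sign_strings length_sign_strings)
  have "?A \<inter> ?T = ?T" and "?A \<inter> - ?T = ?A - ?T" using TA by auto
  moreover have "card (?A - ?T) = 2 ^ ?k - ?r"
    using TA cT by (simp add: card_Diff_subset card_sign_vectors finite_subset finite_sign_vectors)
  ultimately show ?thesis
    using cT \<open>?r \<le> 2 ^ ?k\<close>
    by (simp add: leaf_norm_def sum.If_cases finite_sign_vectors of_nat_diff)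
qed

lemma beta_unit_row_tree_matrix:
  assumes "n \<ge> 1"
  shows "beta n n (unit_row_tree_matrix n)
       = (real (n - 2 ^ tree_k n) * sqrt (real (tree_k n) + 2)
          + (2 ^ tree_k n - real (n - 2 ^ tree_k n)) * sqrt (real (tree_k n) + 1)) / 2 ^ tree_k n"
proof -
  let ?k = "tree_k n" and ?N = "\<lambda>x. inf_norm_Ax n n (unit_row_tree_matrix n) x"
  obtain m where n: "n = Suc m" using assms by (cases n) auto
  have "?k \<le> m" using Suc_le_two_power[of ?k] tree_k_bounds(1)[OF assms] n by simp
  have flip: "(\<Sum>xs\<in>sign_vectors m. ?N (a # xs))
      = (\<Sum>xs\<in>sign_vectors m. leaf_norm n (take ?k xs))"
    if "a \<in> {-1, 1}" for a
  proof -
    have "(\<Sum>xs\<in>sign_vectors m. ?N (a # xs))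
        = (\<Sum>xs\<in>sign_vectors m. leaf_norm n (take ?k (map ((*) a) xs)))"
      using that assms
      by (intro sum.cong) (auto simp: n sign_vectors_def inf_norm_unit_row_tree_matrix)
    then show ?thesis using sum_sign_vectors_scale[OF that] by simp
  qed
  have "(\<Sum>x\<in>sign_vectors n. ?N x) = 2 * (\<Sum>xs\<in>sign_vectors m. leaf_norm n (take ?k xs))"
    unfolding n sum_sign_vectors_Suc sum.distrib using flip[of "-1"] flip[of 1] by (simp add: n)
  also have "\<dots> = 2 * 2 ^ (m - ?k) * (\<Sum>s\<in>sign_vectors ?k. leaf_norm n s)"
    using sum_sign_vectors_take[of "leaf_norm n" ?k "m - ?k"] \<open>?k \<le> m\<close> by simp
  finally have "beta n n (unit_row_tree_matrix n) = (\<Sum>s\<in>sign_vectors ?k. leaf_norm n s) / 2 ^ ?k"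
    using \<open>?k \<le> m\<close> by (simp add: beta_def n power_diff)
  then show ?thesis by (simp add: sum_leaf_norm[OF assms])
qed

theorem theorem3:
  fixes n :: nat
  assumes "n \<ge> 1"
  defines "k \<equiv> nat \<lfloor>log 2 (real n)\<rfloor>"
  shows "beta n n (unit_row_tree_matrix n) =
           (2 * sqrt (real k + 1) - sqrt (real k + 2))
           + real n / 2 ^ k * (sqrt (real k + 2) - sqrt (real k + 1))
         \<and> (n = 2 ^ k \<longrightarrow> beta n n (unit_row_tree_matrix n) = sqrt (real k + 1))"
proof -
  have k: "k = tree_k n" by (simp add: k_def tree_k_def)
  have r: "real (n - 2 ^ k) = real n - 2 ^ k"
    using tree_k_bounds(1)[OF assms(1)] by (simp add: k of_nat_diff)
  have main: "beta n n (unit_row_tree_matrix n) =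
           (2 * sqrt (real k + 1) - sqrt (real k + 2))
           + real n / 2 ^ k * (sqrt (real k + 2) - sqrt (real k + 1))"
    using beta_unit_row_tree_matrix[OF assms(1)] unfolding k[symmetric] r
    by (simp add: field_simps)
  then show ?thesis by auto
qed

end
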